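(* Let $\gamma_a,\gamma_s>0$, $\sigma_B>0$, $q>0$, $\varepsilon_a\in(0,2)$, and let $\beta_s$ be the piecewise linear coalbedo described in the context. Consider the system \[ \gamma_a T_a'=\varepsilon_a\sigma_B|T_s|^3T_s-2\varepsilon_a\sigma_B|T_a|^3T_a,\qquad \gamma_s T_s'=-\sigma_B|T_s|^3T_s+\varepsilon_a\sigma_B|T_a|^3T_a+q\beta_s(T_s). \] Assume that the equation $\sigma_B(1-\frac{\varepsilon_a}{2})T^4=q\beta_s(T)$ has exactly three solutions $T^*_{s,1}\in(0,T_{s,-})$, $T^*_{s,2}\in(T_{s,-},T_{s,+})$, $T^*_{s,3}>T_{s,+}$, and that the equation $\sigma_B T^4=q\beta_s(T)$ has exactly one positive solution. Let $\mathcal Q=(0,+\infty)^2$, \[ \mathcal Q_4=\{(T_a,T_s)\in\mathcal Q:\ T_s<2^{1/4}T_a,\ -\sigma_B T_s^4+\varepsilon_a\sigma_B T_a^4+q\beta_s(T_s)>0\}, \] and $\mathcal C_{\mathrm{right}}=\partial\mathcal Q_4\cap\mathcal Q$. Then for every initial condition in $\mathcal C_{\mathrm{right}}$ which is not an equilibrium point, the solution followed backward in time reaches the horizontal axis: there exists $\tau>0$ such that $T_s(-\tau)=0$ and $T_a(-\tau)>0$.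
   Context: The coalbedo is $\beta_s(T)=\beta_{s,-}$ for $T\le T_{s,-}$, $\beta_s(T)=\beta_{s,-}+(\beta_{s,+}-\beta_{s,-})\frac{T-T_{s,-}}{T_{s,+}-T_{s,-}}$ for $T\in[T_{s,-},T_{s,+}]$, and $\beta_s(T)=\beta_{s,+}$ for $T\ge T_{s,+}$, where $T_{s,+}>T_{s,-}>0$ and $\beta_{s,+}>\beta_{s,-}>0$. The equilibrium points of the system in $[0,\infty)^2$ are then $(2^{-1/4}T^*_{s,i},T^*_{s,i})$, $i=1,2,3$. *)

theory Defs
  imports "HOL-Analysis.Analysis"
begin

definition coalbedo :: "real \<Rightarrow> real \<Rightarrow> real \<Rightarrow> real \<Rightarrow> real \<Rightarrow> real" where
  "coalbedo Tm Tp bm bp T =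
     (if T \<le> Tm then bm
      else if T \<le> Tp then bm + (bp - bm) * (T - Tm) / (Tp - Tm)
      else bp)"

definition fa :: "real \<Rightarrow> real \<Rightarrow> real \<Rightarrow> real \<Rightarrow> real \<Rightarrow> real" where
  "fa ga sB ea Ta Ts = (ea * sB * \<bar>Ts\<bar>^3 * Ts - 2 * ea * sB * \<bar>Ta\<bar>^3 * Ta) / ga"

definition fs :: "real \<Rightarrow> real \<Rightarrow> real \<Rightarrow> real \<Rightarrow> (real \<Rightarrow> real) \<Rightarrow> real \<Rightarrow> real \<Rightarrow> real" where
  "fs gs sB ea q beta Ta Ts =
     (- sB * \<bar>Ts\<bar>^3 * Ts + ea * sB * \<bar>Ta\<bar>^3 * Ta + q * beta Ts) / gs"

definition Qquad :: "(real \<times> real) set" where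
  "Qquad = {p. fst p > 0 \<and> snd p > 0}"

definition Q4 :: "real \<Rightarrow> real \<Rightarrow> real \<Rightarrow> (real \<Rightarrow> real) \<Rightarrow> (real \<times> real) set" where
  "Q4 sB ea q beta = {(Ta, Ts). (Ta, Ts) \<in> Qquad \<and> Ts < root 4 2 * Ta \<and>
       - sB * Ts^4 + ea * sB * Ta^4 + q * beta Ts > 0}"

end

theory Submission
  imports Defs
begin

(* Run time backwards from p = (u0, v0). On the right boundary of Q4 we have Ta' <= 0 <= Ts', and
   along the backward flow Ta increases, Ts decreases and the region {fs >= 0} is never left,
   because fs grows with Ta. The rate of Ta - Ts is bounded below by a constant m > 0, which is
   positive at the start precisely because p is not an equilibrium. Hence Ta eventually exceeds a
   level U at which the Ts-equation forces Ts down at the uniform rate q bm / gs, so Ts reaches 0 in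
   finite time, while Ts + k Ta grows at most linearly and keeps Ta bounded. To obtain a solution at
   all, the backward field is clamped to a box containing this orbit; the clamped field is globally
   Lipschitz, and Picard iteration in a Bielecki-weighted sup norm solves it on any interval. *)

section \<open>Global solutions of Lipschitz ODEs\<close>

(* Bielecki's trick: writing Y s = exp (2 L s) psi s, the solutions of Y = y0 + integral of G o Y
   on [0, T] are the fixed points of this map, and it is a 1/2-contraction in the sup norm of psi.
   Clamping t to [0, T] makes it act on bounded continuous functions on the whole line. *)
definition weighted_picard ::
    "('a::banach \<Rightarrow> 'a) \<Rightarrow> real \<Rightarrow> real \<Rightarrow> 'a \<Rightarrow> (real \<Rightarrow> 'a) \<Rightarrow> real \<Rightarrow> 'a" where
  "weighted_picard G L T y0 \<psi> t =
     (let c = max 0 (min T t)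
      in exp (- 2 * L * c) *\<^sub>R (y0 + integral {0..c} (\<lambda>s. G (exp (2 * L * s) *\<^sub>R \<psi> s))))"

lemma exp_weighted_integral_le:
  fixes f :: "real \<Rightarrow> 'a::banach"
  assumes L: "0 < L" and c: "0 \<le> c" and d: "0 \<le> d" and f: "f integrable_on {0..c}"
    and bound: "\<And>s. s \<in> {0..c} \<Longrightarrow> norm (f s) \<le> L * d * exp (2 * L * s)"
  shows "exp (- 2 * L * c) * norm (integral {0..c} f) \<le> d / 2"
proof -
  have "((\<lambda>s. L * d * exp (2 * L * s)) has_integral
      ((\<lambda>s. d * exp (2 * L * s) / 2) c - (\<lambda>s. d * exp (2 * L * s) / 2) 0)) {0..c}"
    by (rule fundamental_theorem_of_calculus)
      (use c in \<open>auto simp: has_real_derivative_iff_has_vector_derivative[symmetric]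
        intro!: derivative_eq_intros\<close>)
  then have exp_int: "((\<lambda>s. L * d * exp (2 * L * s)) has_integral (d * exp (2 * L * c) / 2 - d / 2)) {0..c}"
    by simp
  have "norm (integral {0..c} f) \<le> d * exp (2 * L * c) / 2 - d / 2"
    using integral_norm_bound_integral[OF f has_integral_integrable[OF exp_int] bound]
      integral_unique[OF exp_int] by simp
  then have "exp (- 2 * L * c) * norm (integral {0..c} f)
      \<le> exp (- 2 * L * c) * (d * exp (2 * L * c) / 2 - d / 2)"
    by (intro mult_left_mono) auto
  also have "\<dots> = d / 2 - exp (- 2 * L * c) * d / 2"
    by (simp add: exp_minus field_simps)
  also have "\<dots> \<le> d / 2" using d by simp
  finally show ?thesis .
qed

lemma weighted_picard_bcontfun:
  fixes G :: "'a::banach \<Rightarrow> 'a"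
  assumes G: "continuous_on UNIV G" and \<psi>: "continuous_on UNIV \<psi>" and T: "0 \<le> T"
  shows "weighted_picard G L T y0 \<psi> \<in> bcontfun"
proof -
  define H where "H t = exp (- 2 * L * t) *\<^sub>R (y0 + integral {0..t} (\<lambda>s. G (exp (2 * L * s) *\<^sub>R \<psi> s)))" for t
  have H: "continuous_on {0..T} H"
    unfolding H_def
    by (intro continuous_intros indefinite_integral_continuous_1 integrable_continuous_interval
        continuous_on_compose2[OF G]) (auto intro: continuous_on_subset[OF \<psi>])
  have clamp: "max 0 (min T t) \<in> {0..T}" for t using T by auto
  have eq: "weighted_picard G L T y0 \<psi> = H \<circ> (\<lambda>t. max 0 (min T t))"
    by (auto simp: weighted_picard_def H_def Let_def)
  have "continuous_on UNIV (weighted_picard G L T y0 \<psi>)"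
    unfolding eq by (intro continuous_on_compose continuous_intros continuous_on_subset[OF H]) (use clamp in auto)
  moreover have "range (weighted_picard G L T y0 \<psi>) \<subseteq> H ` {0..T}"
    using clamp by (auto simp: eq)
  then have "bounded (range (weighted_picard G L T y0 \<psi>))"
    by (rule bounded_subset[OF compact_imp_bounded[OF compact_continuous_image[OF H compact_Icc]]])
  ultimately show ?thesis by (auto simp: bcontfun_def)
qed

lemma weighted_picard_contraction:
  fixes G :: "'a::banach \<Rightarrow> 'a" and a b :: "real \<Rightarrow>\<^sub>C 'a"
  assumes G: "L-lipschitz_on UNIV G" and L: "0 < L" and T: "0 \<le> T"
  shows "dist (weighted_picard G L T y0 a t) (weighted_picard G L T y0 b t) \<le> dist a b / 2"
proof -
  define c where "c = max 0 (min T t)"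
  define F where "F \<psi> s = G (exp (2 * L * s) *\<^sub>R apply_bcontfun \<psi> s)" for \<psi> s
  have c: "0 \<le> c" by (simp add: c_def)
  have Gc: "continuous_on UNIV G" using G by (rule lipschitz_on_continuous_on)
  have int: "F \<psi> integrable_on {0..c}" for \<psi>
    unfolding F_def by (intro integrable_continuous_interval continuous_on_compose2[OF Gc] continuous_intros) auto
  have "norm (F a s - F b s) \<le> L * dist a b * exp (2 * L * s)" for s
  proof -
    have "norm (F a s - F b s) \<le> L * (exp (2 * L * s) * norm (a s - b s))"
      using lipschitz_on_normD[OF G, of "exp (2 * L * s) *\<^sub>R a s" "exp (2 * L * s) *\<^sub>R b s"]
      by (simp add: F_def flip: scaleR_diff_right)
    also have "\<dots> \<le> L * (exp (2 * L * s) * dist a b)"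
      using dist_bounded[of a s b] L by (intro mult_left_mono) (auto simp: dist_norm)
    finally show ?thesis by (simp add: ac_simps)
  qed
  then have "exp (- 2 * L * c) * norm (integral {0..c} (\<lambda>s. F a s - F b s)) \<le> dist a b / 2"
    by (intro exp_weighted_integral_le L c zero_le_dist integrable_diff int)
  moreover have "dist (weighted_picard G L T y0 a t) (weighted_picard G L T y0 b t)
      = exp (- 2 * L * c) * norm (integral {0..c} (\<lambda>s. F a s - F b s))"
    by (simp add: weighted_picard_def c_def[symmetric] F_def[symmetric] dist_norm
        integral_diff[OF int int] flip: scaleR_diff_right)
  ultimately show ?thesis by simp
qed

lemma lipschitz_ode_solution_exists:
  fixes G :: "'a::banach \<Rightarrow> 'a"
  assumes G: "L-lipschitz_on UNIV G" and T: "0 \<le> T"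
  shows "\<exists>Y. Y 0 = y0 \<and> (\<forall>s\<in>{0..T}. (Y has_vector_derivative G (Y s)) (at s within {0..T}))"
proof -
  define L' where "L' = L + 1"
  have L': "0 < L'" using lipschitz_on_nonneg[OF G] by (simp add: L'_def)
  have G': "L'-lipschitz_on UNIV G" using G by (rule lipschitz_on_le) (simp add: L'_def)
  have Gc: "continuous_on UNIV G" using G by (rule lipschitz_on_continuous_on)
  define P where "P \<psi> = Bcontfun (weighted_picard G L' T y0 (apply_bcontfun \<psi>))" for \<psi>
  have P: "apply_bcontfun (P \<psi>) = weighted_picard G L' T y0 (apply_bcontfun \<psi>)" for \<psi>
    unfolding P_def by (intro Bcontfun_inverse weighted_picard_bcontfun Gc T) simp
  have "dist (P a) (P b) \<le> 1 / 2 * dist a b" for a b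
    by (rule dist_bound) (use weighted_picard_contraction[OF G' L' T] in \<open>simp add: P\<close>)
  then obtain \<psi> where fixpoint: "P \<psi> = \<psi>" using banach_fix_type[of "1/2" P] by auto
  define F where "F s = G (exp (2 * L' * s) *\<^sub>R \<psi> s)" for s
  define Y where "Y t = y0 + integral {0..t} F" for t
  have F: "continuous_on UNIV F"
    unfolding F_def by (intro continuous_on_compose2[OF Gc] continuous_intros) auto
  have FY: "F s = G (Y s)" if "s \<in> {0..T}" for s
  proof -
    have "\<psi> s = weighted_picard G L' T y0 \<psi> s" using fixpoint P by metis
    also have "\<dots> = exp (- 2 * L' * s) *\<^sub>R Y s"
      using that by (simp add: weighted_picard_def Y_def F_def[abs_def])
    finally have "exp (2 * L' * s) *\<^sub>R \<psi> s = Y s"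
      by (simp add: exp_minus[symmetric] exp_add[symmetric])
    then show ?thesis by (simp add: F_def)
  qed
  show ?thesis
  proof (intro exI[of _ Y] conjI ballI)
    fix s assume s: "s \<in> {0..T}"
    have "((\<lambda>u. integral {0..u} F) has_vector_derivative F s) (at s within {0..T})"
      by (rule integral_has_vector_derivative[OF continuous_on_subset[OF F] s]) auto
    then have "(Y has_vector_derivative F s) (at s within {0..T})"
      unfolding Y_def by (intro derivative_eq_intros) auto
    then show "(Y has_vector_derivative G (Y s)) (at s within {0..T})"
      by (simp only: FY[OF s])
  qed (simp add: Y_def)
qed

lemma lipschitz_on_min_const: "1-lipschitz_on U (\<lambda>x::real. min c x)"
  by (auto simp: lipschitz_on_def dist_real_def min_def)

lemma lipschitz_on_max_const: "1-lipschitz_on U (\<lambda>x::real. max c x)"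
  by (auto simp: lipschitz_on_def dist_real_def max_def)

lemma lipschitz_on_fst: "1-lipschitz_on U fst"
  by (auto simp: lipschitz_on_def dist_fst_le)

lemma lipschitz_on_snd: "1-lipschitz_on U snd"
  by (auto simp: lipschitz_on_def dist_snd_le)

lemma lipschitz_on_power:
  fixes b :: real
  assumes "0 \<le> b"
  shows "(real n * b ^ (n - 1))-lipschitz_on {-b..b} (\<lambda>x. x ^ n)"
proof (cases "b = 0")
  case True
  then show ?thesis by (simp add: lipschitz_on_def)
next
  case False
  with assms have b: "0 < b" by simp
  show ?thesis
  proof (rule lipschitz_onI)
    fix x y assume "x \<in> {-b..b}" "y \<in> {-b..b}"
    then have "\<bar>x / b\<bar> \<le> 1" "\<bar>y / b\<bar> \<le> 1" using b by (auto simp: abs_le_iff field_simps)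
    then have "\<bar>(x / b) ^ n - (y / b) ^ n\<bar> \<le> real n * \<bar>x / b - y / b\<bar>"
      using norm_power_diff[of "x / b" "y / b" n] by simp
    then have "b ^ n * \<bar>(x / b) ^ n - (y / b) ^ n\<bar> \<le> b ^ n * (real n * \<bar>x / b - y / b\<bar>)"
      using b by (intro mult_left_mono) auto
    moreover have "b ^ n * \<bar>(x / b) ^ n - (y / b) ^ n\<bar> = \<bar>x ^ n - y ^ n\<bar>"
      using b by (simp add: power_divide abs_divide flip: diff_divide_distrib)
    moreover have "b ^ n * (real n * \<bar>x / b - y / b\<bar>) = real n * b ^ (n - 1) * \<bar>x - y\<bar>"
      using b by (cases n) (simp_all add: abs_divide field_simps flip: diff_divide_distrib)
    ultimately show "dist (x ^ n) (y ^ n) \<le> real n * b ^ (n - 1) * dist x y"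
      by (simp add: dist_real_def)
  qed (use b in simp)
qed

lemma DERIV_ge_imp_diff_ge:
  fixes f f' :: "real \<Rightarrow> real"
  assumes "a \<le> b"
    and "\<And>x. x \<in> {a..b} \<Longrightarrow> (f has_real_derivative f' x) (at x within {a..b})"
    and "\<And>x. x \<in> {a..b} \<Longrightarrow> c \<le> f' x"
  shows "c * (b - a) \<le> f b - f a"
proof -
  obtain x where "x \<in> {a..b}" "f b - f a = f' x * (b - a)"
    using mvt_very_simple[of a b f "\<lambda>x. (*) (f' x)"] assms(1,2)
    by (auto simp: has_field_derivative_def)
  then show ?thesis using assms(1,3) by (simp add: mult_right_mono)
qed

lemma DERIV_le_imp_diff_le:
  fixes f f' :: "real \<Rightarrow> real"
  assumes "a \<le> b"
    and "\<And>x. x \<in> {a..b} \<Longrightarrow> (f has_real_derivative f' x) (at x within {a..b})"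
    and "\<And>x. x \<in> {a..b} \<Longrightarrow> f' x \<le> c"
  shows "f b - f a \<le> c * (b - a)"
proof -
  have "(- c) * (b - a) \<le> (- f b) - (- f a)"
    by (rule DERIV_ge_imp_diff_ge[of a b "\<lambda>x. - f x" "\<lambda>x. - f' x"])
      (use assms in \<open>auto intro: DERIV_minus\<close>)
  then show ?thesis by simp
qed

lemma continuous_on_nonneg_barrier:
  fixes w :: "real \<Rightarrow> real"
  assumes cont: "continuous_on {0..T} w" and start: "0 \<le> w 0"
    and no_descent: "\<And>a b. 0 \<le> a \<Longrightarrow> a \<le> b \<Longrightarrow> b \<le> T \<Longrightarrow>
      (\<And>s. s \<in> {a..b} \<Longrightarrow> w s \<le> 0) \<Longrightarrow> w a \<le> w b"
    and r: "r \<in> {0..T}"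
  shows "0 \<le> w r"
proof (rule ccontr)
  assume neg: "\<not> 0 \<le> w r"
  define S where "S = {0..r} \<inter> w -` {0..}"
  have "closed S"
    unfolding S_def by (rule continuous_closed_preimage[OF continuous_on_subset[OF cont]]) (use r in auto)
  moreover have "0 \<in> S" "bdd_above S" using start r by (auto simp: S_def bdd_above_def)
  ultimately have "Sup S \<in> S" using closed_contains_Sup by blast
  define a where "a = Sup S"
  have last: "s \<le> a" if "s \<in> S" for s using cSup_upper[OF that \<open>bdd_above S\<close>] by (simp add: a_def)
  have a: "0 \<le> a" "a \<le> r" "0 \<le> w a" using \<open>Sup S \<in> S\<close> by (auto simp: S_def a_def)
  obtain z where z: "a \<le> z" "z \<le> r" "w z = 0"
    using IVT2'[of w r 0 a] a neg continuous_on_subset[OF cont, of "{a..r}"] r by auto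
  then have "z \<in> S" using a by (simp add: S_def)
  with z last have wa: "w a = 0" by force
  have "w s \<le> 0" if "s \<in> {a..r}" for s
  proof (rule ccontr)
    assume "\<not> w s \<le> 0"
    then have "s \<in> S" using that a by (simp add: S_def)
    then show False using last that wa \<open>\<not> w s \<le> 0\<close> by force
  qed
  then have "w a \<le> w r" using no_descent[of a r] a r by auto
  with wa neg show False by simp
qed

lemma has_real_derivative_reflect:
  assumes "(f has_real_derivative f') (at (- t) within {0..\<tau>})"
  shows "((\<lambda>t. f (- t)) has_real_derivative - f') (at t within {- \<tau>..0})"
proof -
  have "(uminus has_real_derivative -1) (at t within {- \<tau>..0})"
    by (intro derivative_eq_intros) auto
  moreover have "uminus ` {- \<tau>..0} = {0..\<tau>}" by simp
  ultimately show ?thesis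
    using DERIV_image_chain[of f f' uminus t "{- \<tau>..0}" "-1"] assms by (simp add: o_def)
qed

lemma has_vector_derivative_fst_snd:
  fixes Y :: "real \<Rightarrow> real \<times> real"
  assumes "(Y has_vector_derivative (a, b)) F"
  shows "((\<lambda>t. fst (Y t)) has_real_derivative a) F" "((\<lambda>t. snd (Y t)) has_real_derivative b) F"
  using has_derivative_fst[OF assms[unfolded has_vector_derivative_def]]
    has_derivative_snd[OF assms[unfolded has_vector_derivative_def]]
  unfolding has_real_derivative_iff_has_vector_derivative has_vector_derivative_def by simp_all

lemma coalbedo_eq_clamp:
  assumes "Tm < Tp"
  shows "coalbedo Tm Tp bm bp x = bm + (bp - bm) * max 0 (min 1 ((x - Tm) / (Tp - Tm)))"
proof -
  have d: "0 < Tp - Tm" using assms by simp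
  consider "x \<le> Tm" | "Tm < x" "x \<le> Tp" | "Tp < x" by linarith
  then show ?thesis
  proof cases
    case 1
    then have "(x - Tm) / (Tp - Tm) \<le> 0" using d by (simp add: divide_le_0_iff)
    then show ?thesis using 1 by (simp add: coalbedo_def)
  next
    case 2
    then have "0 \<le> (x - Tm) / (Tp - Tm)" "(x - Tm) / (Tp - Tm) \<le> 1" using d by simp_all
    then show ?thesis using 2 by (simp add: coalbedo_def)
  next
    case 3
    then have "1 \<le> (x - Tm) / (Tp - Tm)" using d by simp
    then show ?thesis using 3 assms by (simp add: coalbedo_def)
  qed
qed

lemma coalbedo_lipschitz:
  assumes "Tm < Tp"
  shows "\<exists>K. K-lipschitz_on UNIV (coalbedo Tm Tp bm bp)"
proof -
  define K where "K = \<bar>1 / (Tp - Tm)\<bar>"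
  have "(K * 1 + 0)-lipschitz_on UNIV (\<lambda>x. (1 / (Tp - Tm)) * x - Tm / (Tp - Tm))"
    unfolding K_def by (intro lipschitz_intros)
  then have "(1 * (1 * (K * 1 + 0)))-lipschitz_on UNIV (\<lambda>x. max 0 (min 1 ((1 / (Tp - Tm)) * x - Tm / (Tp - Tm))))"
    by (intro lipschitz_on_compose2[OF _ lipschitz_on_max_const]
        lipschitz_on_compose2[OF _ lipschitz_on_min_const]) simp
  then have "(0 + \<bar>bp - bm\<bar> * (1 * (1 * (K * 1 + 0))))-lipschitz_on UNIV
      (\<lambda>x. bm + (bp - bm) * max 0 (min 1 ((1 / (Tp - Tm)) * x - Tm / (Tp - Tm))))"
    by (intro lipschitz_intros)
  then show ?thesis
    using assms by (auto simp: coalbedo_eq_clamp diff_divide_distrib)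
qed

lemma coalbedo_ge: "Tm < Tp \<Longrightarrow> bm \<le> bp \<Longrightarrow> bm \<le> coalbedo Tm Tp bm bp x"
  by (auto simp: coalbedo_def)

lemma fa_nonneg_eq:
  "0 \<le> x \<Longrightarrow> 0 \<le> y \<Longrightarrow> fa ga sB ea x y = ea * sB * (y ^ 4 - 2 * x ^ 4) / ga"
  by (simp add: fa_def power4_eq_xxxx power3_eq_cube algebra_simps)

lemma fs_nonneg_eq:
  "0 \<le> x \<Longrightarrow> 0 \<le> y \<Longrightarrow> fs gs sB ea q beta x y = (ea * sB * x ^ 4 - sB * y ^ 4 + q * beta y) / gs"
  by (simp add: fs_def power4_eq_xxxx power3_eq_cube algebra_simps)

lemma frontier_Q4_field_signs:
  assumes beta: "continuous_on UNIV beta" and ga: "0 < ga" and gs: "0 < gs" and sB: "0 < sB"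
    and ea: "0 < ea" and p: "p \<in> frontier (Q4 sB ea q beta) \<inter> Qquad"
  shows "fa ga sB ea (fst p) (snd p) \<le> 0" "0 \<le> fs gs sB ea q beta (fst p) (snd p)"
proof -
  define W where "W z = - sB * snd z ^ 4 + ea * sB * fst z ^ 4 + q * beta (snd z)" for z
  have "closed ({z. snd z \<le> root 4 2 * fst z} \<inter> {z. 0 \<le> W z})"
    unfolding W_def by (intro closed_Int closed_Collect_le continuous_intros continuous_on_compose2[OF beta]) auto
  moreover have "Q4 sB ea q beta \<subseteq> {z. snd z \<le> root 4 2 * fst z} \<inter> {z. 0 \<le> W z}"
    by (auto simp: Q4_def W_def)
  moreover have "p \<in> closure (Q4 sB ea q beta)" using p by (auto simp: frontier_def)
  ultimately have right: "snd p \<le> root 4 2 * fst p" and W: "0 \<le> W p"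
    using closure_minimal by blast+
  have pos: "0 < fst p" "0 < snd p" using p by (auto simp: Qquad_def)
  have "snd p ^ 4 \<le> (root 4 2 * fst p) ^ 4" using right pos by (intro power_mono) auto
  then have "ea * sB * (snd p ^ 4 - 2 * fst p ^ 4) \<le> 0"
    using sB ea by (intro mult_nonneg_nonpos) (auto simp: power_mult_distrib)
  then show "fa ga sB ea (fst p) (snd p) \<le> 0"
    using pos ga by (simp add: fa_nonneg_eq divide_nonpos_pos)
  show "0 \<le> fs gs sB ea q beta (fst p) (snd p)"
    using pos gs W by (simp add: fs_nonneg_eq W_def)
qed

lemma backward_field_lipschitz_on_square:
  assumes beta: "K-lipschitz_on UNIV beta" and R: "0 \<le> R"
  shows "\<exists>L. L-lipschitz_on (cbox (0, 0) (R, R))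
    (\<lambda>z. (- fa ga sB ea (fst z) (snd z), min 0 (- fs gs sB ea q beta (fst z) (snd z))))"
proof -
  define S where "S = cbox (0, 0) (R, R)"
  have S: "fst z \<in> {0..R}" "snd z \<in> {0..R}" if "z \<in> S" for z
    using that by (auto simp: S_def cbox_Pair_eq)
  have P: "(4 * R ^ 3)-lipschitz_on {-R..R} (\<lambda>x. x ^ 4)"
    using lipschitz_on_power[OF R, of 4] by simp
  have X: "(4 * R ^ 3 * 1)-lipschitz_on S (\<lambda>z. fst z ^ 4)"
    by (rule lipschitz_on_compose2[OF lipschitz_on_fst lipschitz_on_subset[OF P]]) (use S R in force)
  have Y: "(4 * R ^ 3 * 1)-lipschitz_on S (\<lambda>z. snd z ^ 4)"
    by (rule lipschitz_on_compose2[OF lipschitz_on_snd lipschitz_on_subset[OF P]]) (use S R in force)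
  have B: "(K * 1)-lipschitz_on S (\<lambda>z. beta (snd z))"
    by (intro lipschitz_on_compose2 lipschitz_on_snd lipschitz_on_subset[OF beta]) auto
  define c where "c = 4 * R ^ 3 * 1"
  have L1: "(\<bar>2 * ea * sB / ga\<bar> * c + \<bar>ea * sB / ga\<bar> * c)-lipschitz_on S
      (\<lambda>z. (2 * ea * sB / ga) * fst z ^ 4 - (ea * sB / ga) * snd z ^ 4)"
    unfolding c_def by (intro lipschitz_on_diff lipschitz_on_cmult_real X Y)
  have "(\<bar>sB / gs\<bar> * c + \<bar>ea * sB / gs\<bar> * c + \<bar>q / gs\<bar> * (K * 1))-lipschitz_on S
      (\<lambda>z. (sB / gs) * snd z ^ 4 - (ea * sB / gs) * fst z ^ 4 - (q / gs) * beta (snd z))"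
    unfolding c_def by (intro lipschitz_on_diff lipschitz_on_cmult_real X Y B)
  then have L2: "(1 * (\<bar>sB / gs\<bar> * c + \<bar>ea * sB / gs\<bar> * c + \<bar>q / gs\<bar> * (K * 1)))-lipschitz_on S
      (\<lambda>z. min 0 ((sB / gs) * snd z ^ 4 - (ea * sB / gs) * fst z ^ 4 - (q / gs) * beta (snd z)))"
    by (rule lipschitz_on_compose2[OF _ lipschitz_on_min_const])
  obtain L where L: "L-lipschitz_on S (\<lambda>z. ((2 * ea * sB / ga) * fst z ^ 4 - (ea * sB / ga) * snd z ^ 4,
      min 0 ((sB / gs) * snd z ^ 4 - (ea * sB / gs) * fst z ^ 4 - (q / gs) * beta (snd z))))"
    using lipschitz_on_Pair[OF L1 L2] by blast
  have "L-lipschitz_on S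
      (\<lambda>z. (- fa ga sB ea (fst z) (snd z), min 0 (- fs gs sB ea q beta (fst z) (snd z))))"
    using L by (rule lipschitz_on_transform)
      (use S in \<open>simp add: fa_nonneg_eq fs_nonneg_eq diff_divide_distrib add_divide_distrib algebra_simps\<close>)
  then show ?thesis unfolding S_def by blast
qed

section \<open>The backward orbit from the right boundary of Q4\<close>

locale backward_orbit =
  fixes ga gs sB ea q K bm u0 v0 :: real and beta :: "real \<Rightarrow> real"
  assumes ga: "0 < ga" and gs: "0 < gs" and sB: "0 < sB" and ea: "0 < ea" and q: "0 < q"
    and beta_lipschitz: "K-lipschitz_on UNIV beta" and beta_ge: "\<And>x. bm \<le> beta x" and bm: "0 < bm"
    and u0: "0 < u0" and v0: "0 < v0"
    and fa_start: "fa ga sB ea u0 v0 \<le> 0" and fs_start: "0 \<le> fs gs sB ea q beta u0 v0"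
    and not_equilibrium: "\<not> (fa ga sB ea u0 v0 = 0 \<and> fs gs sB ea q beta u0 v0 = 0)"
begin

abbreviation Fa :: "real \<Rightarrow> real \<Rightarrow> real" where "Fa \<equiv> fa ga sB ea"
abbreviation Fs :: "real \<Rightarrow> real \<Rightarrow> real" where "Fs \<equiv> fs gs sB ea q beta"

lemma beta_continuous: "continuous_on UNIV beta"
  using beta_lipschitz by (rule lipschitz_on_continuous_on)

lemma Fa_antimono_fst: "0 \<le> x \<Longrightarrow> x \<le> x' \<Longrightarrow> 0 \<le> y \<Longrightarrow> Fa x' y \<le> Fa x y"
  using ga sB ea by (simp add: fa_nonneg_eq divide_right_mono mult_left_mono power_mono)

lemma Fa_strict_mono_snd: "0 \<le> x \<Longrightarrow> 0 \<le> y \<Longrightarrow> y < y' \<Longrightarrow> Fa x y < Fa x y'"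
  using ga sB ea by (simp add: fa_nonneg_eq divide_strict_right_mono power_strict_mono)

lemma Fs_mono_fst: "0 \<le> x \<Longrightarrow> x \<le> x' \<Longrightarrow> 0 \<le> y \<Longrightarrow> Fs x y \<le> Fs x' y"
  using gs sB ea by (simp add: fs_nonneg_eq divide_right_mono mult_left_mono power_mono)

definition drift :: "real \<Rightarrow> real" where
  "drift y = max (Fs u0 y) 0 - Fa u0 y"

lemma drift_pos:
  assumes "y \<in> {0..v0}"
  shows "0 < drift y"
proof (cases "y < v0")
  case True
  then have "Fa u0 y < 0" using Fa_strict_mono_snd[of u0 y v0] fa_start u0 assms by simp
  then show ?thesis by (simp add: drift_def)
next
  case False
  then have "y = v0" using assms by simp
  then show ?thesis using fa_start fs_start not_equilibrium by (auto simp: drift_def)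
qed

lemma drift_continuous: "continuous_on {0..v0} drift"
  unfolding drift_def fa_def fs_def
  by (intro continuous_intros continuous_on_compose2[OF beta_continuous]) (use ga gs in auto)

definition m :: real where "m = Inf (drift ` {0..v0})"

lemma m_le_drift: "y \<in> {0..v0} \<Longrightarrow> m \<le> drift y"
  unfolding m_def
  by (intro cInf_lower imageI bounded_imp_bdd_below compact_imp_bounded
      compact_continuous_image drift_continuous compact_Icc)

lemma m_pos: "0 < m"
proof -
  obtain y where y: "y \<in> {0..v0}" "\<And>y'. y' \<in> {0..v0} \<Longrightarrow> drift y \<le> drift y'"
    using continuous_attains_inf[OF compact_Icc _ drift_continuous] v0 by auto
  then have "drift y \<le> m" unfolding m_def using v0 by (intro cINF_greatest) auto
  then show ?thesis using drift_pos[OF y(1)] by simp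
qed

(* While Ts > 0, Ta exceeds U after time (U + v0) / m; from then on Ts decreases at rate at least
   q bm / gs and so reaches 0 before T. Meanwhile Ts + k Ta grows at rate at most C, which bounds Ta
   by A up to time T. *)
definition U :: real where "U = v0 / root 4 ea"
definition T :: real where "T = (U + v0) / m + 2 * gs * v0 / (q * bm)"
definition k :: real where "k = ga / (4 * gs)"
definition C :: real where "C = sB * v0 ^ 4 / gs"
definition A :: real where "A = max U (u0 + (v0 + C * T) / k)"

lemma U_pos: "0 < U"
  using v0 ea by (simp add: U_def)

lemma v0_pow_eq: "v0 ^ 4 = ea * U ^ 4"
  using ea by (simp add: U_def power_divide)

lemma T_pos: "0 < T"
  unfolding T_def using U_pos v0 m_pos gs q bm by (intro add_pos_pos divide_pos_pos mult_pos_pos) auto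

lemma k_pos: "0 < k"
  using ga gs by (simp add: k_def)

lemma C_nonneg: "0 \<le> C"
  using sB gs by (simp add: C_def)

lemma A_ge: "U \<le> A" "u0 \<le> A"
proof -
  have "0 \<le> (v0 + C * T) / k" using C_nonneg T_pos k_pos v0 by simp
  then show "U \<le> A" "u0 \<le> A" by (auto simp: A_def)
qed

(* The backward field (- Fa, - Fs), clamped to the box [u0, A] x [0, v0] to make it globally
   Lipschitz, and with - Fs cut off at 0 to make Ts monotone. Until Ts reaches 0 the orbit stays in
   the box and Fs stays nonnegative, so there G is the true backward field. *)
definition clamp_box :: "real \<times> real \<Rightarrow> real \<times> real" where
  "clamp_box z = (max u0 (min A (fst z)), max 0 (min v0 (snd z)))"

lemma clamp_box_mem: "fst (clamp_box z) \<in> {u0..A}" "snd (clamp_box z) \<in> {0..v0}"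
  using A_ge v0 by (auto simp: clamp_box_def)

lemma clamp_box_id: "fst z \<in> {u0..A} \<Longrightarrow> snd z \<in> {0..v0} \<Longrightarrow> clamp_box z = z"
  by (auto simp: clamp_box_def)

definition G :: "real \<times> real \<Rightarrow> real \<times> real" where
  "G z = (- Fa (fst (clamp_box z)) (snd (clamp_box z)),
          min 0 (- Fs (fst (clamp_box z)) (snd (clamp_box z))))"

lemma G_lipschitz: "\<exists>L. L-lipschitz_on UNIV G"
proof -
  define R where "R = max A v0"
  have "0 \<le> R" using v0 by (simp add: R_def)
  then obtain L
    where L: "L-lipschitz_on (cbox (0, 0) (R, R)) (\<lambda>z. (- Fa (fst z) (snd z), min 0 (- Fs (fst z) (snd z))))"
    using backward_field_lipschitz_on_square[OF beta_lipschitz] by blast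
  have "(1 * (1 * 1))-lipschitz_on UNIV (\<lambda>z. max u0 (min A (fst z)))"
    "(1 * (1 * 1))-lipschitz_on UNIV (\<lambda>z. max 0 (min v0 (snd z)))"
    by (intro lipschitz_on_compose2[OF _ lipschitz_on_max_const] lipschitz_on_compose2[OF _ lipschitz_on_min_const]
        lipschitz_on_fst lipschitz_on_snd)+
  then obtain L' where L': "L'-lipschitz_on UNIV clamp_box"
    unfolding clamp_box_def using lipschitz_on_Pair by blast
  have "clamp_box z \<in> cbox (0, 0) (R, R)" for z
    using clamp_box_mem[of z] u0 by (cases "clamp_box z") (auto simp: cbox_Pair_eq R_def)
  then have "clamp_box ` UNIV \<subseteq> cbox (0, 0) (R, R)" by blast
  then have "(L * L')-lipschitz_on UNIV G"
    unfolding G_def by (intro lipschitz_on_compose2[OF L' lipschitz_on_subset[OF L]])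
  then show ?thesis by blast
qed

lemma G_fst_nonneg: "0 \<le> fst (G z)"
proof -
  define x y where "x = fst (clamp_box z)" and "y = snd (clamp_box z)"
  have xy: "u0 \<le> x" "0 \<le> y" "y \<le> v0" using clamp_box_mem[of z] by (auto simp: x_def y_def)
  have "Fa x y \<le> Fa u0 y" using xy u0 by (intro Fa_antimono_fst) auto
  also have "\<dots> \<le> Fa u0 v0" using xy u0 Fa_strict_mono_snd[of u0 y v0] by (cases "y = v0") auto
  finally show ?thesis using fa_start by (simp add: G_def x_def y_def)
qed

lemma G_snd_nonpos: "snd (G z) \<le> 0"
  by (simp add: G_def)

lemma m_le_G_fst_minus_snd: "m \<le> fst (G z) - snd (G z)"
proof -
  define x y where "x = fst (clamp_box z)" and "y = snd (clamp_box z)"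
  have xy: "u0 \<le> x" "y \<in> {0..v0}" using clamp_box_mem[of z] by (auto simp: x_def y_def)
  have "Fa x y \<le> Fa u0 y" "Fs u0 y \<le> Fs x y" using xy u0 by (intro Fa_antimono_fst Fs_mono_fst; simp)+
  then have "drift y \<le> fst (G z) - snd (G z)" by (auto simp: drift_def G_def x_def y_def)
  then show ?thesis using m_le_drift[OF xy(2)] by simp
qed

lemma G_snd_plus_k_fst_le: "snd (G z) + k * fst (G z) \<le> C"
proof -
  define x y where "x = fst (clamp_box z)" and "y = snd (clamp_box z)"
  have xy: "u0 \<le> x" "0 \<le> y" "y \<le> v0" using clamp_box_mem[of z] by (auto simp: x_def y_def)
  have "- Fs x y - k * Fa x y = (sB * y ^ 4 - (ea * sB * x ^ 4 / 2 + ea * sB * y ^ 4 / 4 + q * beta y)) / gs"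
    using xy u0 ga gs by (simp add: fa_nonneg_eq fs_nonneg_eq k_def field_simps)
  also have "\<dots> \<le> sB * y ^ 4 / gs"
  proof -
    have "0 \<le> ea * sB * x ^ 4" "0 \<le> ea * sB * y ^ 4" "0 \<le> q * beta y"
      using xy u0 sB ea q beta_ge[of y] bm by auto
    then show ?thesis using gs by (intro divide_right_mono) auto
  qed
  also have "\<dots> \<le> C"
    using xy sB gs by (auto simp: C_def intro!: divide_right_mono power_mono)
  finally show ?thesis by (simp add: G_def x_def y_def)
qed

lemma G_snd_le_when_large:
  assumes "U \<le> fst z"
  shows "snd (G z) \<le> - (q * bm / gs)"
proof -
  define x y where "x = fst (clamp_box z)" and "y = snd (clamp_box z)"
  have xy: "U \<le> x" "0 \<le> y" "y \<le> v0"
    using clamp_box_mem[of z] assms A_ge by (auto simp: x_def y_def clamp_box_def)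
  have "sB * y ^ 4 \<le> sB * (ea * U ^ 4)" using xy sB by (simp add: power_mono flip: v0_pow_eq)
  also have "\<dots> \<le> sB * (ea * x ^ 4)" using xy sB ea U_pos by (simp add: power_mono)
  moreover have "q * bm \<le> q * beta y" using beta_ge[of y] q by simp
  ultimately have "q * bm \<le> ea * sB * x ^ 4 - sB * y ^ 4 + q * beta y"
    by (simp add: algebra_simps)
  then have "q * bm / gs \<le> Fs x y"
    using xy U_pos gs by (simp add: fs_nonneg_eq divide_right_mono)
  then show ?thesis by (simp add: G_def x_def y_def)
qed

lemma G_on_box:
  assumes "x \<in> {u0..A}" "y \<in> {0..v0}" "0 \<le> Fs x y"
  shows "G (x, y) = (- Fa x y, - Fs x y)"
  using assms by (simp add: G_def clamp_box_id)

lemma clamped_solution_exists: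
  "\<exists>y1 y2. y1 0 = u0 \<and> y2 0 = v0 \<and> (\<forall>s\<in>{0..T}.
     (y1 has_real_derivative fst (G (y1 s, y2 s))) (at s within {0..T}) \<and>
     (y2 has_real_derivative snd (G (y1 s, y2 s))) (at s within {0..T}))"
proof -
  obtain L where "L-lipschitz_on UNIV G" using G_lipschitz by blast
  then obtain Y where Y0: "Y 0 = (u0, v0)"
    and Y: "\<And>s. s \<in> {0..T} \<Longrightarrow> (Y has_vector_derivative (fst (G (Y s)), snd (G (Y s)))) (at s within {0..T})"
    using lipschitz_ode_solution_exists[of L G T "(u0, v0)"] T_pos by auto
  show ?thesis
    using Y0 has_vector_derivative_fst_snd[OF Y] by (intro exI[of _ "\<lambda>s. fst (Y s)"] exI[of _ "\<lambda>s. snd (Y s)"]) auto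
qed

end

locale clamped_backward_solution = backward_orbit +
  fixes y1 y2 :: "real \<Rightarrow> real"
  assumes y1_0: "y1 0 = u0" and y2_0: "y2 0 = v0"
    and y1_deriv: "\<And>s. s \<in> {0..T} \<Longrightarrow> (y1 has_real_derivative fst (G (y1 s, y2 s))) (at s within {0..T})"
    and y2_deriv: "\<And>s. s \<in> {0..T} \<Longrightarrow> (y2 has_real_derivative snd (G (y1 s, y2 s))) (at s within {0..T})"
begin

lemma y1_deriv_within: "0 \<le> a \<Longrightarrow> b \<le> T \<Longrightarrow> s \<in> {a..b} \<Longrightarrow>
    (y1 has_real_derivative fst (G (y1 s, y2 s))) (at s within {a..b})"
  by (rule DERIV_subset[OF y1_deriv]) auto

lemma y2_deriv_within: "0 \<le> a \<Longrightarrow> b \<le> T \<Longrightarrow> s \<in> {a..b} \<Longrightarrow>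
    (y2 has_real_derivative snd (G (y1 s, y2 s))) (at s within {a..b})"
  by (rule DERIV_subset[OF y2_deriv]) auto

lemma y1_continuous: "continuous_on {0..T} y1"
  using y1_deriv DERIV_continuous continuous_on_eq_continuous_within by blast

lemma y2_continuous: "continuous_on {0..T} y2"
  using y2_deriv DERIV_continuous continuous_on_eq_continuous_within by blast

lemma y1_mono: "0 \<le> a \<Longrightarrow> a \<le> b \<Longrightarrow> b \<le> T \<Longrightarrow> y1 a \<le> y1 b"
  using DERIV_ge_imp_diff_ge[of a b y1 "\<lambda>s. fst (G (y1 s, y2 s))" 0] y1_deriv_within G_fst_nonneg
  by auto

lemma y2_antimono: "0 \<le> a \<Longrightarrow> a \<le> b \<Longrightarrow> b \<le> T \<Longrightarrow> y2 b \<le> y2 a"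
  using DERIV_le_imp_diff_le[of a b y2 "\<lambda>s. snd (G (y1 s, y2 s))" 0] y2_deriv_within G_snd_nonpos
  by auto

lemma y1_minus_y2_ge:
  assumes "s \<in> {0..T}"
  shows "u0 - v0 + m * s \<le> y1 s - y2 s"
proof -
  have "m * (s - 0) \<le> (y1 s - y2 s) - (y1 0 - y2 0)"
    by (rule DERIV_ge_imp_diff_ge[of 0 s _ "\<lambda>t. fst (G (y1 t, y2 t)) - snd (G (y1 t, y2 t))"])
      (use assms m_le_G_fst_minus_snd in \<open>auto intro!: DERIV_diff y1_deriv_within y2_deriv_within\<close>)
  then show ?thesis by (simp add: y1_0 y2_0)
qed

lemma y2_plus_k_y1_le:
  assumes "s \<in> {0..T}"
  shows "y2 s + k * y1 s \<le> v0 + k * u0 + C * s"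
proof -
  have "(y2 s + k * y1 s) - (y2 0 + k * y1 0) \<le> C * (s - 0)"
    by (rule DERIV_le_imp_diff_le[of 0 s _ "\<lambda>t. snd (G (y1 t, y2 t)) + k * fst (G (y1 t, y2 t))"])
      (use assms G_snd_plus_k_fst_le in \<open>auto intro!: DERIV_add DERIV_cmult y1_deriv_within y2_deriv_within\<close>)
  then show ?thesis by (simp add: y1_0 y2_0)
qed

(* Where Fs <= 0 the clamped Ts-equation is stationary while Ta grows, and Fs increases with Ta. *)
lemma Fs_clamped_nonneg:
  assumes "s \<in> {0..T}"
  shows "0 \<le> Fs (fst (clamp_box (y1 s, y2 s))) (snd (clamp_box (y1 s, y2 s)))"
proof (rule continuous_on_nonneg_barrier[OF _ _ _ assms])
  show "continuous_on {0..T} (\<lambda>s. Fs (fst (clamp_box (y1 s, y2 s))) (snd (clamp_box (y1 s, y2 s))))"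
    unfolding fs_def clamp_box_def
    by (intro continuous_intros continuous_on_compose2[OF beta_continuous] y1_continuous y2_continuous)
      (use gs in auto)
  show "0 \<le> Fs (fst (clamp_box (y1 0, y2 0))) (snd (clamp_box (y1 0, y2 0)))"
    using fs_start u0 v0 A_ge by (simp add: y1_0 y2_0 clamp_box_id)
next
  fix a b assume ab: "0 \<le> a" "a \<le> b" "b \<le> T"
    and stalled: "\<And>s. s \<in> {a..b} \<Longrightarrow> Fs (fst (clamp_box (y1 s, y2 s))) (snd (clamp_box (y1 s, y2 s))) \<le> 0"
  have "0 * (b - a) \<le> y2 b - y2 a"
  proof (rule DERIV_ge_imp_diff_ge[OF ab(2)])
    show "(y2 has_real_derivative snd (G (y1 s, y2 s))) (at s within {a..b})" if "s \<in> {a..b}" for s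
      using ab that by (intro y2_deriv_within)
    show "0 \<le> snd (G (y1 s, y2 s))" if "s \<in> {a..b}" for s
      using stalled[OF that] by (simp add: G_def)
  qed
  then have "y2 b = y2 a" using y2_antimono ab by force
  then have snd_eq: "snd (clamp_box (y1 b, y2 b)) = snd (clamp_box (y1 a, y2 a))"
    by (simp add: clamp_box_def)
  have "fst (clamp_box (y1 a, y2 a)) \<le> fst (clamp_box (y1 b, y2 b))"
    using y1_mono[OF ab] by (auto simp: clamp_box_def)
  then show "Fs (fst (clamp_box (y1 a, y2 a))) (snd (clamp_box (y1 a, y2 a)))
      \<le> Fs (fst (clamp_box (y1 b, y2 b))) (snd (clamp_box (y1 b, y2 b)))"
    unfolding snd_eq using clamp_box_mem[of "(y1 a, y2 a)"] u0 by (intro Fs_mono_fst) auto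
qed

lemma y2_nonpos_at_T: "y2 T \<le> 0"
proof (rule ccontr)
  assume "\<not> y2 T \<le> 0"
  then have pos: "0 < y2 s" if "s \<in> {0..T}" for s using y2_antimono[of s T] that by auto
  define s1 where "s1 = (U + v0) / m"
  have s1: "0 \<le> s1" "s1 \<le> T" using U_pos v0 m_pos gs q bm by (auto simp: s1_def T_def)
  have large: "snd (G (y1 s, y2 s)) \<le> - (q * bm / gs)" if s: "s \<in> {s1..T}" for s
  proof (rule G_snd_le_when_large)
    have "m * s1 \<le> m * s" using s m_pos by (intro mult_left_mono) auto
    then show "U \<le> fst (y1 s, y2 s)"
      using y1_minus_y2_ge[of s] pos[of s] s s1 u0 m_pos by (simp add: s1_def)
  qed
  have "y2 T - y2 s1 \<le> - (q * bm / gs) * (T - s1)"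
    by (rule DERIV_le_imp_diff_le[OF s1(2) y2_deriv_within large]) (use s1 in auto)
  moreover have "(q * bm / gs) * (T - s1) = 2 * v0" using gs q bm by (simp add: T_def s1_def)
  moreover have "y2 s1 \<le> v0" using y2_antimono[of 0 s1] s1 y2_0 by simp
  ultimately show False using pos[of T] T_pos v0 by auto
qed

lemma y2_hits_zero: "\<exists>\<tau>\<in>{0<..T}. y2 \<tau> = 0"
proof -
  obtain \<tau> where "0 \<le> \<tau>" "\<tau> \<le> T" "y2 \<tau> = 0"
    using IVT2'[of y2 T 0 0] y2_nonpos_at_T y2_0 v0 T_pos y2_continuous by auto
  moreover have "\<tau> \<noteq> 0" using \<open>y2 \<tau> = 0\<close> y2_0 v0 by auto
  ultimately show ?thesis by auto
qed

lemma orbit_in_box: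
  assumes "\<tau> \<le> T" "y2 \<tau> = 0" "s \<in> {0..\<tau>}"
  shows "y1 s \<in> {u0..A}" "y2 s \<in> {0..v0}"
proof -
  have y2: "0 \<le> y2 s" "y2 s \<le> v0" using y2_antimono[of s \<tau>] y2_antimono[of 0 s] assms y2_0 by auto
  then show "y2 s \<in> {0..v0}" by simp
  have "k * y1 s \<le> v0 + k * u0 + C * T"
    using y2_plus_k_y1_le[of s] mult_left_mono[of s T C] C_nonneg assms y2 by auto
  also have "\<dots> = k * (u0 + (v0 + C * T) / k)" using k_pos by (simp add: field_simps)
  finally have "y1 s \<le> A" using k_pos by (simp add: A_def)
  then show "y1 s \<in> {u0..A}" using y1_mono[of 0 s] y1_0 assms by auto
qed

lemma solution_reaches_axis:
  "\<exists>\<tau>>0. \<exists>Ta Ts :: real \<Rightarrow> real. Ta 0 = u0 \<and> Ts 0 = v0 \<and>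
     (\<forall>t\<in>{-\<tau>..0}. (Ta has_real_derivative Fa (Ta t) (Ts t)) (at t within {-\<tau>..0}) \<and>
                     (Ts has_real_derivative Fs (Ta t) (Ts t)) (at t within {-\<tau>..0})) \<and>
     Ts (-\<tau>) = 0 \<and> Ta (-\<tau>) > 0"
proof -
  obtain \<tau> where \<tau>: "0 < \<tau>" "\<tau> \<le> T" "y2 \<tau> = 0" using y2_hits_zero by auto
  have G: "G (y1 s, y2 s) = (- Fa (y1 s) (y2 s), - Fs (y1 s) (y2 s))" if s: "s \<in> {0..\<tau>}" for s
  proof (rule G_on_box)
    show box: "y1 s \<in> {u0..A}" "y2 s \<in> {0..v0}"
      using orbit_in_box[OF \<tau>(2,3) s] by auto
    show "0 \<le> Fs (y1 s) (y2 s)"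
      using Fs_clamped_nonneg[of s] clamp_box_id[of "(y1 s, y2 s)"] box s \<tau>(2) by simp
  qed
  have "(y1 has_real_derivative - Fa (y1 (- t)) (y2 (- t))) (at (- t) within {0..\<tau>})"
       "(y2 has_real_derivative - Fs (y1 (- t)) (y2 (- t))) (at (- t) within {0..\<tau>})"
    if "t \<in> {-\<tau>..0}" for t
    using y1_deriv_within[of 0 \<tau> "- t"] y2_deriv_within[of 0 \<tau> "- t"] G[of "- t"] that \<tau> by auto
  then have "((\<lambda>t. y1 (- t)) has_real_derivative Fa (y1 (- t)) (y2 (- t))) (at t within {-\<tau>..0})"
      "((\<lambda>t. y2 (- t)) has_real_derivative Fs (y1 (- t)) (y2 (- t))) (at t within {-\<tau>..0})"
    if "t \<in> {-\<tau>..0}" for t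
    using has_real_derivative_reflect that by fastforce+
  moreover have "0 < y1 \<tau>" using orbit_in_box[OF \<tau>(2,3), of \<tau>] \<tau> u0 by auto
  ultimately show ?thesis
    using \<tau> y1_0 y2_0 by (intro exI[of _ \<tau>] conjI exI[of _ "\<lambda>t. y1 (- t)"] exI[of _ "\<lambda>t. y2 (- t)"]) auto
qed

end

lemma (in backward_orbit) backward_orbit_reaches_axis:
  "\<exists>\<tau>>0. \<exists>Ta Ts :: real \<Rightarrow> real. Ta 0 = u0 \<and> Ts 0 = v0 \<and>
     (\<forall>t\<in>{-\<tau>..0}. (Ta has_real_derivative Fa (Ta t) (Ts t)) (at t within {-\<tau>..0}) \<and>
                     (Ts has_real_derivative Fs (Ta t) (Ts t)) (at t within {-\<tau>..0})) \<and>
     Ts (-\<tau>) = 0 \<and> Ta (-\<tau>) > 0"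
proof -
  obtain y1 y2 where "y1 0 = u0" "y2 0 = v0" "\<forall>s\<in>{0..T}.
      (y1 has_real_derivative fst (G (y1 s, y2 s))) (at s within {0..T}) \<and>
      (y2 has_real_derivative snd (G (y1 s, y2 s))) (at s within {0..T})"
    using clamped_solution_exists by blast
  then interpret clamped_backward_solution ga gs sB ea q K bm u0 v0 beta y1 y2
    by unfold_locales auto
  show ?thesis by (rule solution_reaches_axis)
qed

theorem lemma5p1:
  fixes ga gs sB q ea Tm Tp bm bp T1 T2 T3 :: real
  defines "beta \<equiv> coalbedo Tm Tp bm bp"
  assumes ga: "ga > 0" and gs: "gs > 0" and sB: "sB > 0" and q: "q > 0"
    and ea: "0 < ea" "ea < 2"
    and Tpm: "0 < Tm" "Tm < Tp" and bpm: "0 < bm" "bm < bp"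
    and three: "{T. T > 0 \<and> sB * (1 - ea / 2) * T^4 = q * beta T} = {T1, T2, T3}"
    and T1: "0 < T1" "T1 < Tm" and T2: "Tm < T2" "T2 < Tp" and T3: "Tp < T3"
    and one: "\<exists>!T. T > 0 \<and> sB * T^4 = q * beta T"
    and p: "p \<in> frontier (Q4 sB ea q beta) \<inter> Qquad"
    and noneq: "\<not> (fa ga sB ea (fst p) (snd p) = 0 \<and> fs gs sB ea q beta (fst p) (snd p) = 0)"
  shows "\<exists>\<tau> > 0. \<exists>Ta Ts :: real \<Rightarrow> real.
           Ta 0 = fst p \<and> Ts 0 = snd p \<and>
           (\<forall>t \<in> {-\<tau>..0}.
              (Ta has_real_derivative fa ga sB ea (Ta t) (Ts t)) (at t within {-\<tau>..0}) \<and>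
              (Ts has_real_derivative fs gs sB ea q beta (Ta t) (Ts t)) (at t within {-\<tau>..0})) \<and>
           Ts (-\<tau>) = 0 \<and> Ta (-\<tau>) > 0"
proof -
  obtain K where K: "K-lipschitz_on UNIV beta"
    unfolding beta_def using coalbedo_lipschitz[OF Tpm(2)] by blast
  have beta_ge: "bm \<le> beta x" for x
    unfolding beta_def using coalbedo_ge Tpm(2) bpm(2) by simp
  have signs: "fa ga sB ea (fst p) (snd p) \<le> 0" "0 \<le> fs gs sB ea q beta (fst p) (snd p)"
    using frontier_Q4_field_signs[OF lipschitz_on_continuous_on[OF K] ga gs sB ea(1) p] by auto
  interpret backward_orbit ga gs sB ea q K bm "fst p" "snd p" beta
    using ga gs sB ea q K beta_ge bpm signs noneq p by unfold_locales (auto simp: Qquad_def)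
  show ?thesis by (rule backward_orbit_reaches_axis)
qed

end
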